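(* Let $n=n_1+n_2+n_3=m_1+m_2+m_3$ be partitions of $n$ into positive integers, let $G=U(n)$, let $L=U(n_1)\times U(n_2)\times U(n_3)$ and $H=U(m_1)\times U(m_2)\times U(m_3)$ be the natural block-diagonal subgroups of $G$, and let $G'=O(n)$. Then $LG'H\subsetneq G$.
   Context: $LG'H=\{xyz:x\in L,y\in G',z\in H\}$. *)

theory Defs
  imports Complex_Main "Jordan_Normal_Form.Matrix"
begin

definition ctrans :: "complex mat \<Rightarrow> complex mat" where
  "ctrans A = mat (dim_col A) (dim_row A) (\<lambda>(i,j). cnj (A $$ (j,i)))"

definition unitary_group :: "nat \<Rightarrow> complex mat set" where
  "unitary_group n = {U \<in> carrier_mat n n. U * ctrans U = 1\<^sub>m n}"

definition orthogonal_group :: "nat \<Rightarrow> complex mat set" where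
  "orthogonal_group n = {U \<in> carrier_mat n n.
      (\<forall>i<n. \<forall>j<n. U $$ (i,j) \<in> \<real>) \<and> U * transpose_mat U = 1\<^sub>m n}"

definition block3 :: "nat \<Rightarrow> nat \<Rightarrow> nat \<Rightarrow> nat" where
  "block3 a b i = (if i < a then 0 else if i < a + b then 1 else 2)"

definition block_unitary3 :: "nat \<Rightarrow> nat \<Rightarrow> nat \<Rightarrow> complex mat set" where
  "block_unitary3 a b c = {U \<in> unitary_group (a + b + c).
      \<forall>i < a + b + c. \<forall>j < a + b + c. block3 a b i \<noteq> block3 a b j \<longrightarrow> U $$ (i,j) = 0}"

definition set_prod3 :: "complex mat set \<Rightarrow> complex mat set \<Rightarrow> complex mat set \<Rightarrow> complex mat set" where
  "set_prod3 X Y Z = {x * y * z | x y z. x \<in> X \<and> y \<in> Y \<and> z \<in> Z}"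

end

theory Submission
  imports Defs "Jordan_Normal_Form.Determinant" "HOL-Combinatorics.Transposition"
begin

(* With X_ab = P_a M Q_b, where P_a and Q_b project onto the a-th block of the row partition
   n1 + n2 + n3 and the b-th block of the column partition m1 + m2 + m3, the function
     M |-> trace (X_00 (ctrans X_20) X_22 (ctrans X_02))
   is constant on double cosets L M H: L commutes with every P_a and H with every Q_b, so
   X_ab (L M H) = L X_ab(M) H, and the unitary factors cancel inside the trace.  It is real on
   the real matrices O(n).  A unitary matrix carrying a fixed 3x3 unitary u on one row of each
   row block and one column of each column block, and a permutation matrix elsewhere, has
   invariant u_00 cnj(u_20) u_22 cnj(u_02), which for the chosen u is (-8 + 6i)/81. *)

lemma ctrans_dim [simp]: "dim_row (ctrans A) = dim_col A" "dim_col (ctrans A) = dim_row A"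
  by (auto simp: ctrans_def)

lemma ctrans_index [simp]: "i < dim_col A \<Longrightarrow> j < dim_row A \<Longrightarrow> ctrans A $$ (i,j) = cnj (A $$ (j,i))"
  by (auto simp: ctrans_def)

lemma ctrans_carrier_mat [simp]: "A \<in> carrier_mat m n \<Longrightarrow> ctrans A \<in> carrier_mat n m"
  by (metis carrier_matD carrier_matI ctrans_dim)

lemma ctrans_mult: "dim_col A = dim_row B \<Longrightarrow> ctrans (A * B) = ctrans B * ctrans A"
  by (intro eq_matI) (auto simp: scalar_prod_def mult.commute)

lemma assoc_mult_mat_dim: "dim_col A = dim_row B \<Longrightarrow> dim_col B = dim_row C \<Longrightarrow> A * B * C = A * (B * C)"
  by (rule assoc_mult_mat[of A "dim_row A" "dim_col A" B "dim_col B" C "dim_col C"]) auto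

lemma unitary_groupD:
  assumes "U \<in> unitary_group n"
  shows "U \<in> carrier_mat n n" "U * ctrans U = 1\<^sub>m n" "ctrans U * U = 1\<^sub>m n"
  using assms mat_mult_left_right_inverse[of U n "ctrans U"] by (auto simp: unitary_group_def)

lemma unitary_group_mult:
  assumes A: "A \<in> unitary_group n" and B: "B \<in> unitary_group n"
  shows "A * B \<in> unitary_group n"
proof -
  note unitary_groupD[OF A] unitary_groupD[OF B]
  have "A * B * ctrans (A * B) = A * (B * ctrans B) * ctrans A"
    using \<open>A \<in> carrier_mat n n\<close> \<open>B \<in> carrier_mat n n\<close>
    by (simp add: ctrans_mult assoc_mult_mat_dim)
  also have "\<dots> = 1\<^sub>m n"
    using \<open>B * ctrans B = 1\<^sub>m n\<close> \<open>A * ctrans A = 1\<^sub>m n\<close> \<open>A \<in> carrier_mat n n\<close>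
    by (simp del: assoc_mult_mat)
  finally show ?thesis
    using \<open>A \<in> carrier_mat n n\<close> \<open>B \<in> carrier_mat n n\<close> by (simp add: unitary_group_def)
qed

lemma ctrans_orthogonal: "U \<in> orthogonal_group n \<Longrightarrow> ctrans U = transpose_mat U"
  by (intro eq_matI) (auto simp: orthogonal_group_def Reals_cnj_iff)

lemma orthogonal_group_subset_unitary_group: "orthogonal_group n \<subseteq> unitary_group n"
  using ctrans_orthogonal by (auto simp: orthogonal_group_def unitary_group_def)

lemma block_unitary3_subset_unitary_group: "block_unitary3 a b c \<subseteq> unitary_group (a + b + c)"
  by (auto simp: block_unitary3_def)

lemma set_prod3_subset_unitary_group:
  assumes "X \<subseteq> unitary_group n" "Y \<subseteq> unitary_group n" "Z \<subseteq> unitary_group n"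
  shows "set_prod3 X Y Z \<subseteq> unitary_group n"
  using assms by (auto simp: set_prod3_def intro!: unitary_group_mult)

definition block_proj :: "nat \<Rightarrow> nat \<Rightarrow> nat \<Rightarrow> nat \<Rightarrow> complex mat" where
  "block_proj n a b k = mat n n (\<lambda>(i,j). if i = j \<and> block3 a b i = k then 1 else 0)"

lemma block_proj_dim [simp]: "dim_row (block_proj n a b k) = n" "dim_col (block_proj n a b k) = n"
  by (auto simp: block_proj_def)

lemma index_block_proj_mult:
  assumes "i < n" "j < dim_col M" "dim_row M = n"
  shows "(block_proj n a b k * M) $$ (i,j) = (if block3 a b i = k then M $$ (i,j) else 0)"
proof -
  have "(block_proj n a b k * M) $$ (i,j)
      = (\<Sum>t\<in>{0..<n}. (if i = t \<and> block3 a b i = k then 1 else 0) * M $$ (t,j))"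
    using assms by (auto simp: scalar_prod_def block_proj_def)
  also have "\<dots> = (\<Sum>t\<in>{0..<n}. if t = i then (if block3 a b i = k then M $$ (i,j) else 0) else 0)"
    by (rule sum.cong) auto
  finally show ?thesis
    using assms by simp
qed

lemma index_mult_block_proj:
  assumes "i < dim_row M" "j < n" "dim_col M = n"
  shows "(M * block_proj n a b k) $$ (i,j) = (if block3 a b j = k then M $$ (i,j) else 0)"
proof -
  have "(M * block_proj n a b k) $$ (i,j)
      = (\<Sum>t\<in>{0..<n}. M $$ (i,t) * (if t = j \<and> block3 a b t = k then 1 else 0))"
    using assms by (auto simp: scalar_prod_def block_proj_def)
  also have "\<dots> = (\<Sum>t\<in>{0..<n}. if t = j then (if block3 a b j = k then M $$ (i,j) else 0) else 0)"
    by (rule sum.cong) auto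
  finally show ?thesis
    using assms by simp
qed

lemma block_proj_commute:
  assumes "U \<in> block_unitary3 a b c" "n = a + b + c"
  shows "block_proj n a b k * U = U * block_proj n a b k"
proof -
  have U: "U \<in> carrier_mat n n"
    using assms by (auto simp: block_unitary3_def unitary_group_def)
  show ?thesis
  proof (rule eq_matI)
    fix i j assume "i < dim_row (U * block_proj n a b k)" "j < dim_col (U * block_proj n a b k)"
    with U have ij: "i < n" "j < n" by auto
    have "(block_proj n a b k * U) $$ (i, j) = (if block3 a b i = k then U $$ (i,j) else 0)"
      using U ij by (intro index_block_proj_mult) auto
    moreover have "(U * block_proj n a b k) $$ (i, j) = (if block3 a b j = k then U $$ (i,j) else 0)"
      using U ij by (intro index_mult_block_proj) auto
    ultimately show "(block_proj n a b k * U) $$ (i, j) = (U * block_proj n a b k) $$ (i, j)"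
      using assms ij by (auto simp: block_unitary3_def)
  qed (use U in auto)
qed

definition mat_trace :: "'a :: comm_ring mat \<Rightarrow> 'a" where
  "mat_trace A = (\<Sum>i<dim_row A. A $$ (i,i))"

lemma mat_trace_mult_comm:
  assumes "A \<in> carrier_mat n m" "B \<in> carrier_mat m n"
  shows "mat_trace (A * B) = mat_trace (B * A)"
proof -
  have "mat_trace (A * B) = (\<Sum>i<n. \<Sum>k<m. A $$ (i,k) * B $$ (k,i))"
    using assms by (auto simp: mat_trace_def scalar_prod_def atLeast0LessThan)
  also have "\<dots> = (\<Sum>k<m. \<Sum>i<n. B $$ (k,i) * A $$ (i,k))"
    by (subst sum.swap) (simp add: mult.commute)
  also have "\<dots> = mat_trace (B * A)"
    using assms by (auto simp: mat_trace_def scalar_prod_def atLeast0LessThan)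
  finally show ?thesis .
qed

lemma mat_trace_unitary_conj:
  assumes L: "L \<in> unitary_group n" and Y: "Y \<in> carrier_mat n n"
  shows "mat_trace (L * Y * ctrans L) = mat_trace Y"
proof -
  note L' = unitary_groupD[OF L]
  have "mat_trace (L * Y * ctrans L) = mat_trace (ctrans L * (L * Y))"
    using L' Y by (intro mat_trace_mult_comm[of _ n n]) auto
  also have "ctrans L * (L * Y) = (ctrans L * L) * Y"
    using L' Y by (intro assoc_mult_mat[symmetric]) auto
  also have "\<dots> = Y"
    using L' Y by (simp del: assoc_mult_mat)
  finally show ?thesis .
qed

lemma unitary_mult_ctrans_cancel:
  assumes "U \<in> unitary_group n" "dim_row X = n"
  shows "U * (ctrans U * X) = X" "ctrans U * (U * X) = X"
  using unitary_groupD[OF assms(1)] assms(2)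
  by (simp_all add: assoc_mult_mat_dim[symmetric] del: assoc_mult_mat)

definition real_mat :: "complex mat \<Rightarrow> bool" where
  "real_mat M \<longleftrightarrow> (\<forall>i<dim_row M. \<forall>j<dim_col M. M $$ (i,j) \<in> \<real>)"

lemma real_mat_mult: "real_mat A \<Longrightarrow> real_mat B \<Longrightarrow> dim_col A = dim_row B \<Longrightarrow> real_mat (A * B)"
  by (auto simp: real_mat_def scalar_prod_def row_def col_def intro!: sum_in_Reals)

lemma real_mat_ctrans: "real_mat A \<Longrightarrow> real_mat (ctrans A)"
  by (auto simp: real_mat_def Reals_cnj_iff)

lemma real_mat_block_proj: "real_mat (block_proj n a b k)"
  by (auto simp: real_mat_def block_proj_def)

lemma mat_trace_real_mat: "real_mat A \<Longrightarrow> A \<in> carrier_mat n n \<Longrightarrow> mat_trace A \<in> \<real>"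
  by (auto simp: real_mat_def mat_trace_def carrier_matD intro!: sum_in_Reals)

context
  fixes n n1 n2 m1 m2 :: nat
begin

definition block_part :: "nat \<Rightarrow> nat \<Rightarrow> complex mat \<Rightarrow> complex mat" where
  "block_part a b M = block_proj n n1 n2 a * M * block_proj n m1 m2 b"

definition double_coset_invariant :: "complex mat \<Rightarrow> complex" where
  "double_coset_invariant M = mat_trace
     ((block_part 0 0 M * ctrans (block_part 2 0 M)) * (block_part 2 2 M * ctrans (block_part 0 2 M)))"

lemma block_part_dim [simp]: "dim_row (block_part a b M) = n" "dim_col (block_part a b M) = n"
  by (auto simp: block_part_def)

lemma index_block_part:
  assumes "M \<in> carrier_mat n n" "i < n" "j < n"
  shows "block_part a b M $$ (i,j) =
    (if block3 n1 n2 i = a \<and> block3 m1 m2 j = b then M $$ (i,j) else 0)"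
proof -
  have "block_part a b M $$ (i,j) =
      (if block3 m1 m2 j = b then (block_proj n n1 n2 a * M) $$ (i,j) else 0)"
    unfolding block_part_def using assms by (intro index_mult_block_proj) auto
  also have "(block_proj n n1 n2 a * M) $$ (i,j) = (if block3 n1 n2 i = a then M $$ (i,j) else 0)"
    using assms by (intro index_block_proj_mult) auto
  finally show ?thesis
    by simp
qed

lemma block_part_mult:
  assumes L: "L \<in> block_unitary3 n1 n2 n3" and H: "H \<in> block_unitary3 m1 m2 m3"
    and n: "n = n1 + n2 + n3" "n = m1 + m2 + m3" and M: "M \<in> carrier_mat n n"
  shows "block_part a b (L * M * H) = L * block_part a b M * H"
proof -
  have "L \<in> carrier_mat n n" "H \<in> carrier_mat n n"
    using L H n by (auto simp: block_unitary3_def unitary_group_def)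
  with M have [simp]: "dim_row L = n" "dim_col L = n" "dim_row H = n" "dim_col H = n"
    "dim_row M = n" "dim_col M = n"
    by auto
  have "block_part a b (L * M * H) = (block_proj n n1 n2 a * L) * M * (H * block_proj n m1 m2 b)"
    by (simp add: block_part_def assoc_mult_mat_dim del: assoc_mult_mat)
  also have "\<dots> = (L * block_proj n n1 n2 a) * M * (block_proj n m1 m2 b * H)"
    by (simp only: block_proj_commute[OF L n(1)] block_proj_commute[OF H n(2)])
  also have "\<dots> = L * block_part a b M * H"
    by (simp add: block_part_def assoc_mult_mat_dim del: assoc_mult_mat)
  finally show ?thesis .
qed

lemma double_coset_invariant_mult:
  assumes L: "L \<in> block_unitary3 n1 n2 n3" and H: "H \<in> block_unitary3 m1 m2 m3"
    and n: "n = n1 + n2 + n3" "n = m1 + m2 + m3" and M: "M \<in> carrier_mat n n"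
  shows "double_coset_invariant (L * M * H) = double_coset_invariant M"
proof -
  have unitary: "L \<in> unitary_group n" "H \<in> unitary_group n"
    using block_unitary3_subset_unitary_group[of n1 n2 n3] block_unitary3_subset_unitary_group[of m1 m2 m3]
      L H n by auto
  then have [simp]: "dim_row L = n" "dim_col L = n" "dim_row H = n" "dim_col H = n"
    using unitary_groupD(1) by blast+
  note cancel = unitary_mult_ctrans_cancel[OF unitary(1)] unitary_mult_ctrans_cancel[OF unitary(2)]
  define A where "A = block_part 0 0 M"
  define B where "B = block_part 2 0 M"
  define C where "C = block_part 2 2 M"
  define D where "D = block_part 0 2 M"
  have "double_coset_invariant (L * M * H) =
      mat_trace ((L * A * H) * ctrans (L * B * H) * ((L * C * H) * ctrans (L * D * H)))"
    by (simp add: double_coset_invariant_def block_part_mult[OF L H n M] A_def B_def C_def D_def)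
  also have "\<dots> = mat_trace (L * (A * ctrans B * (C * ctrans D)) * ctrans L)"
    by (simp add: A_def B_def C_def D_def ctrans_mult assoc_mult_mat_dim cancel del: assoc_mult_mat)
  also have "\<dots> = mat_trace (A * ctrans B * (C * ctrans D))"
    by (rule mat_trace_unitary_conj[OF unitary(1)]) (simp add: A_def B_def C_def D_def carrier_matI)
  finally show ?thesis
    by (simp add: double_coset_invariant_def A_def B_def C_def D_def)
qed

lemma double_coset_invariant_real:
  assumes "real_mat M" "M \<in> carrier_mat n n"
  shows "double_coset_invariant M \<in> \<real>"
proof -
  have "real_mat (block_part a b M)" for a b
    using assms unfolding block_part_def by (intro real_mat_mult real_mat_block_proj) auto
  then show ?thesis
    unfolding double_coset_invariant_def
    by (intro mat_trace_real_mat[where n = n] real_mat_mult real_mat_ctrans) (auto simp: carrier_matI)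
qed

lemma double_coset_invariant_eq_sum:
  assumes M: "M \<in> carrier_mat n n"
  shows "double_coset_invariant M =
    (\<Sum>i<n. \<Sum>j<n. \<Sum>k<n. \<Sum>l<n.
       if block3 n1 n2 i = 0 \<and> block3 n1 n2 j = 2 \<and> block3 m1 m2 k = 0 \<and> block3 m1 m2 l = 2
       then M $$ (i,k) * cnj (M $$ (j,k)) * (M $$ (j,l) * cnj (M $$ (i,l))) else 0)"
proof -
  let ?X = "\<lambda>a b. block_part a b M"
  have "double_coset_invariant M =
      (\<Sum>i<n. \<Sum>j<n. (\<Sum>k<n. ?X 0 0 $$ (i,k) * cnj (?X 2 0 $$ (j,k))) *
                        (\<Sum>l<n. ?X 2 2 $$ (j,l) * cnj (?X 0 2 $$ (i,l))))"
    by (simp add: double_coset_invariant_def mat_trace_def scalar_prod_def atLeast0LessThan)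
  also have "\<dots> = (\<Sum>i<n. \<Sum>j<n. \<Sum>k<n. \<Sum>l<n.
       if block3 n1 n2 i = 0 \<and> block3 n1 n2 j = 2 \<and> block3 m1 m2 k = 0 \<and> block3 m1 m2 l = 2
       then M $$ (i,k) * cnj (M $$ (j,k)) * (M $$ (j,l) * cnj (M $$ (i,l))) else 0)"
    unfolding sum_product by (intro sum.cong refl) (auto simp: index_block_part[OF M])
  finally show ?thesis .
qed

lemma real_mat_orthogonal: "U \<in> orthogonal_group n \<Longrightarrow> real_mat U"
  by (auto simp: real_mat_def orthogonal_group_def)

lemma double_coset_invariant_set_prod3_real:
  assumes n: "n = n1 + n2 + n3" "n = m1 + m2 + m3"
    and X: "X \<in> set_prod3 (block_unitary3 n1 n2 n3) (orthogonal_group n) (block_unitary3 m1 m2 m3)"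
  shows "double_coset_invariant X \<in> \<real>"
proof -
  obtain L U H where "X = L * U * H" and L: "L \<in> block_unitary3 n1 n2 n3"
    and U: "U \<in> orthogonal_group n" and H: "H \<in> block_unitary3 m1 m2 m3"
    using X unfolding set_prod3_def by blast
  moreover have "U \<in> carrier_mat n n"
    using U by (simp add: orthogonal_group_def)
  ultimately have "double_coset_invariant X = double_coset_invariant U"
    using double_coset_invariant_mult[OF L H n] by simp
  also have "\<dots> \<in> \<real>"
    using U \<open>U \<in> carrier_mat n n\<close> by (intro double_coset_invariant_real real_mat_orthogonal)
  finally show ?thesis .
qed

end

definition unitary3 :: "complex mat" where
  "unitary3 = mat_of_rows_list 3
     [[Complex (-2/3) (-1/3), Complex (-1/3) (-1/3), Complex (-1/3) (-1/3)],
      [Complex (-1/3) (-1/3), Complex (2/3) (1/3), Complex (-1/3) (1/3)],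
      [Complex (-1/3) (-1/3), Complex (-1/3) (1/3), Complex (2/3) (1/3)]]"

lemma unitary3_orthonormal_rows:
  assumes "a < 3" "b < 3"
  shows "(\<Sum>c<3. unitary3 $$ (a,c) * cnj (unitary3 $$ (b,c))) = (if a = b then 1 else 0)"
proof -
  from assms have "a \<in> {0, 1, 2}" "b \<in> {0, 1, 2}"
    by auto
  then show ?thesis
    by (auto simp: unitary3_def mat_of_rows_list_def numeral_3_eq_3 Complex_simps)
qed

lemma unitary3_corner_product_not_real:
  "unitary3 $$ (0,0) * cnj (unitary3 $$ (2,0)) * (unitary3 $$ (2,2) * cnj (unitary3 $$ (0,2))) \<notin> \<real>"
  by (simp add: unitary3_def mat_of_rows_list_def complex_is_Real_iff Complex_eq)

context
  fixes n n1 n2 m1 m2 :: nat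
  assumes blocks: "0 < n1" "0 < n2" "n1 + n2 < n" "0 < m1" "0 < m2" "m1 + m2 < n"
begin

(* The rows 0, n1, n - 1 and the columns 0, m1, n - 1 meet each block exactly once, and the
   transposition of n1 and m1 maps the remaining rows bijectively onto the remaining columns. *)
definition embedded_unitary3 :: "complex mat" where
  "embedded_unitary3 = mat n n (\<lambda>(i,k).
     if i \<in> {0, n1, n - 1} then
       if k \<in> {0, m1, n - 1} then unitary3 $$ (block3 n1 n2 i, block3 m1 m2 k) else 0
     else if k = Transposition.transpose n1 m1 i then 1 else 0)"

lemma block3_corners:
  "block3 n1 n2 0 = 0" "block3 n1 n2 n1 = 1" "block3 n1 n2 (n - 1) = 2"
  "block3 m1 m2 0 = 0" "block3 m1 m2 m1 = 1" "block3 m1 m2 (n - 1) = 2"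
  using blocks by (auto simp: block3_def)

lemma block3_inj_on_corners:
  "inj_on (block3 n1 n2) {0, n1, n - 1}" "inj_on (block3 m1 m2) {0, m1, n - 1}"
  using block3_corners by (auto simp: inj_on_def)

lemma transpose_notin_corners:
  "i \<notin> {0, n1, n - 1} \<Longrightarrow> Transposition.transpose n1 m1 i \<notin> {0, m1, n - 1}"
  using blocks by (auto simp: Transposition.transpose_def)

lemma transpose_less:
  "i < n \<Longrightarrow> Transposition.transpose n1 m1 i < n"
  using blocks by (auto simp: Transposition.transpose_def)

lemma index_embedded_unitary3:
  "i < n \<Longrightarrow> k < n \<Longrightarrow> embedded_unitary3 $$ (i,k) =
     (if i \<in> {0, n1, n - 1} then
       if k \<in> {0, m1, n - 1} then unitary3 $$ (block3 n1 n2 i, block3 m1 m2 k) else 0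
     else if k = Transposition.transpose n1 m1 i then 1 else 0)"
  by (simp add: embedded_unitary3_def)

lemma sum_corner_columns:
  "(\<Sum>k<n. if k \<in> {0, m1, n - 1} then f (block3 m1 m2 k) else 0) = (\<Sum>c<3. f c)"
proof -
  have "(\<Sum>k<n. if k \<in> {0, m1, n - 1} then f (block3 m1 m2 k) else 0) =
      (\<Sum>k\<in>{..<n} \<inter> {0, m1, n - 1}. f (block3 m1 m2 k))"
    by (rule sum.inter_restrict[symmetric]) simp
  also have "{..<n} \<inter> {0, m1, n - 1} = {0, m1, n - 1}"
    using blocks by auto
  also have "(\<Sum>k\<in>{0, m1, n - 1}. f (block3 m1 m2 k)) = f 0 + f 1 + f 2"
    using blocks block3_corners by (simp add: add.assoc)
  also have "\<dots> = (\<Sum>c<3. f c)"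
    by (simp add: numeral_3_eq_3 numeral_2_eq_2 add.assoc)
  finally show ?thesis .
qed

lemma embedded_unitary3_dim [simp]: "dim_row embedded_unitary3 = n" "dim_col embedded_unitary3 = n"
  by (simp_all add: embedded_unitary3_def)

lemma embedded_unitary3_carrier_mat [simp]: "embedded_unitary3 \<in> carrier_mat n n"
  by (simp add: carrier_matI)

lemma embedded_unitary3_nonzero:
  assumes "i < n" "k < n" "embedded_unitary3 $$ (i,k) \<noteq> 0"
  shows "i \<in> {0, n1, n - 1} \<longleftrightarrow> k \<in> {0, m1, n - 1}"
    and "i \<notin> {0, n1, n - 1} \<Longrightarrow> k = Transposition.transpose n1 m1 i"
  using assms transpose_notin_corners[of i]
  by (auto simp: index_embedded_unitary3 split: if_splits)

lemma embedded_unitary3_support: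
  assumes "i < n" "j < n" "k < n" "i \<noteq> j"
    and "embedded_unitary3 $$ (i,k) \<noteq> 0" "embedded_unitary3 $$ (j,k) \<noteq> 0"
  shows "i \<in> {0, n1, n - 1}" "j \<in> {0, n1, n - 1}" "k \<in> {0, m1, n - 1}"
proof -
  note i = embedded_unitary3_nonzero[OF assms(1,3,5)] and j = embedded_unitary3_nonzero[OF assms(2,3,6)]
  have "i \<in> {0, n1, n - 1} \<or> j \<in> {0, n1, n - 1}"
    using i(2) j(2) \<open>i \<noteq> j\<close> inj_eq[OF inj_transpose, of n1 m1] by metis
  then show "i \<in> {0, n1, n - 1}" "j \<in> {0, n1, n - 1}" "k \<in> {0, m1, n - 1}"
    using i(1) j(1) by blast+
qed

lemma embedded_unitary3_rows:
  assumes "i < n" "j < n"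
  shows "(\<Sum>k<n. embedded_unitary3 $$ (i,k) * cnj (embedded_unitary3 $$ (j,k))) = (if i = j then 1 else 0)"
proof -
  let ?R = "{0, n1, n - 1}" and ?W = embedded_unitary3
  consider (both) "i \<in> ?R" "j \<in> ?R" | (neither) "i \<notin> ?R" "j \<notin> ?R" | (mixed) "i \<in> ?R \<longleftrightarrow> j \<notin> ?R"
    by blast
  then show ?thesis
  proof cases
    case both
    have "(\<Sum>k<n. ?W $$ (i,k) * cnj (?W $$ (j,k))) = (\<Sum>k<n. if k \<in> {0, m1, n - 1} then
        unitary3 $$ (block3 n1 n2 i, block3 m1 m2 k) * cnj (unitary3 $$ (block3 n1 n2 j, block3 m1 m2 k)) else 0)"
      using both by (intro sum.cong refl) (simp add: index_embedded_unitary3 assms)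
    also have "\<dots> = (\<Sum>c<3. unitary3 $$ (block3 n1 n2 i, c) * cnj (unitary3 $$ (block3 n1 n2 j, c)))"
      by (rule sum_corner_columns)
    also have "\<dots> = (if block3 n1 n2 i = block3 n1 n2 j then 1 else 0)"
      by (rule unitary3_orthonormal_rows) (auto simp: block3_def)
    also have "\<dots> = (if i = j then 1 else 0)"
      using both inj_on_eq_iff[OF block3_inj_on_corners(1)] by simp
    finally show ?thesis .
  next
    case neither
    have "(\<Sum>k<n. ?W $$ (i,k) * cnj (?W $$ (j,k))) =
        (\<Sum>k<n. if k = Transposition.transpose n1 m1 i then (if i = j then 1 else 0) else 0)"
      using neither by (intro sum.cong refl) (auto simp: index_embedded_unitary3 assms inj_eq[OF inj_transpose])
    then show ?thesis
      using transpose_less[OF assms(1)] by simp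
  next
    case mixed
    have "?W $$ (i,k) * cnj (?W $$ (j,k)) = 0" if "k < n" for k
      using mixed embedded_unitary3_nonzero(1)[OF assms(1) that] embedded_unitary3_nonzero(1)[OF assms(2) that]
      by auto
    then have "(\<Sum>k<n. ?W $$ (i,k) * cnj (?W $$ (j,k))) = 0"
      by (intro sum.neutral) simp
    then show ?thesis
      using mixed by auto
  qed
qed

lemma embedded_unitary3_unitary_group: "embedded_unitary3 \<in> unitary_group n"
proof -
  have "embedded_unitary3 * ctrans embedded_unitary3 = 1\<^sub>m n"
  proof (rule eq_matI)
    fix i j assume "i < dim_row (1\<^sub>m n :: complex mat)" "j < dim_col (1\<^sub>m n :: complex mat)"
    then have ij: "i < n" "j < n"
      by auto
    have "(embedded_unitary3 * ctrans embedded_unitary3) $$ (i,j) =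
        (\<Sum>k<n. embedded_unitary3 $$ (i,k) * cnj (embedded_unitary3 $$ (j,k)))"
      using ij by (simp add: scalar_prod_def atLeast0LessThan)
    then show "(embedded_unitary3 * ctrans embedded_unitary3) $$ (i,j) = 1\<^sub>m n $$ (i,j)"
      using ij embedded_unitary3_rows by simp
  qed simp_all
  then show ?thesis
    by (simp add: unitary_group_def)
qed

lemma double_coset_invariant_embedded_unitary3:
  "double_coset_invariant n n1 n2 m1 m2 embedded_unitary3 =
     unitary3 $$ (0,0) * cnj (unitary3 $$ (2,0)) * (unitary3 $$ (2,2) * cnj (unitary3 $$ (0,2)))"
  (is "_ = ?c")
proof -
  let ?W = embedded_unitary3
  have corners: "?W $$ (0,0) = unitary3 $$ (0,0)" "?W $$ (n - 1, 0) = unitary3 $$ (2,0)"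
    "?W $$ (n - 1, n - 1) = unitary3 $$ (2,2)" "?W $$ (0, n - 1) = unitary3 $$ (0,2)"
    using blocks block3_corners by (simp_all add: index_embedded_unitary3 del: One_nat_def)
  have "?c \<noteq> 0"
    using unitary3_corner_product_not_real by auto
  have summand: "(if block3 n1 n2 i = 0 \<and> block3 n1 n2 j = 2 \<and> block3 m1 m2 k = 0 \<and> block3 m1 m2 l = 2
       then ?W $$ (i,k) * cnj (?W $$ (j,k)) * (?W $$ (j,l) * cnj (?W $$ (i,l))) else 0) =
     (if l = n - 1 then if k = 0 then if j = n - 1 then if i = 0 then ?c else 0 else 0 else 0 else 0)"
    if "i < n" "j < n" "k < n" "l < n" for i j k l
  proof -
    define cond where "cond \<longleftrightarrow>
      block3 n1 n2 i = 0 \<and> block3 n1 n2 j = 2 \<and> block3 m1 m2 k = 0 \<and> block3 m1 m2 l = 2"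
    define g where "g = ?W $$ (i,k) * cnj (?W $$ (j,k)) * (?W $$ (j,l) * cnj (?W $$ (i,l)))"
    have at_corner: "i = 0 \<and> j = n - 1 \<and> k = 0 \<and> l = n - 1" if "cond" "g \<noteq> 0"
    proof -
      from that have "i \<noteq> j" "?W $$ (i,k) \<noteq> 0" "?W $$ (j,k) \<noteq> 0" "?W $$ (j,l) \<noteq> 0" "?W $$ (i,l) \<noteq> 0"
        by (auto simp: cond_def g_def)
      with embedded_unitary3_support[OF \<open>i < n\<close> \<open>j < n\<close> \<open>k < n\<close>]
        embedded_unitary3_support[OF \<open>j < n\<close> \<open>i < n\<close> \<open>l < n\<close>]
      have R: "i \<in> {0, n1, n - 1}" "j \<in> {0, n1, n - 1}" and C: "k \<in> {0, m1, n - 1}" "l \<in> {0, m1, n - 1}"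
        by auto
      show ?thesis
        using \<open>cond\<close> block3_corners
          inj_on_eq_iff[OF block3_inj_on_corners(1) R(1), of 0]
          inj_on_eq_iff[OF block3_inj_on_corners(1) R(2), of "n - 1"]
          inj_on_eq_iff[OF block3_inj_on_corners(2) C(1), of 0]
          inj_on_eq_iff[OF block3_inj_on_corners(2) C(2), of "n - 1"]
        by (simp add: cond_def del: One_nat_def)
    qed
    have corner_value: "cond \<and> g = ?c" if "i = 0 \<and> j = n - 1 \<and> k = 0 \<and> l = n - 1"
      using that corners block3_corners by (simp add: cond_def g_def del: One_nat_def)
    have "(if cond then g else 0) =
        (if l = n - 1 then if k = 0 then if j = n - 1 then if i = 0 then ?c else 0 else 0 else 0 else 0)"
    proof (cases "i = 0 \<and> j = n - 1 \<and> k = 0 \<and> l = n - 1")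
      case True
      then show ?thesis
        using corner_value by simp
    next
      case False
      then have "\<not> (cond \<and> g \<noteq> 0)"
        using at_corner by blast
      then have "(if cond then g else 0) = 0"
        by simp
      with False show ?thesis
        by auto
    qed
    then show ?thesis
      by (simp only: cond_def g_def)
  qed
  have "double_coset_invariant n n1 n2 m1 m2 ?W =
      (\<Sum>i<n. \<Sum>j<n. \<Sum>k<n. \<Sum>l<n.
         if l = n - 1 then if k = 0 then if j = n - 1 then if i = 0 then ?c else 0 else 0 else 0 else 0)"
    unfolding double_coset_invariant_eq_sum[OF embedded_unitary3_carrier_mat]
    by (intro sum.cong refl) (simp add: summand)
  also have "\<dots> = ?c"
    using blocks by simp
  finally show ?thesis .
qed

end

theorem proposition6p4:
  fixes n n1 n2 n3 m1 m2 m3 :: nat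
  assumes "n1 > 0" "n2 > 0" "n3 > 0" "m1 > 0" "m2 > 0" "m3 > 0"
    and "n = n1 + n2 + n3" and "n = m1 + m2 + m3"
  shows "set_prod3 (block_unitary3 n1 n2 n3) (orthogonal_group n) (block_unitary3 m1 m2 m3)
           \<subset> unitary_group n"
proof -
  let ?LGH = "set_prod3 (block_unitary3 n1 n2 n3) (orthogonal_group n) (block_unitary3 m1 m2 m3)"
  have "block_unitary3 n1 n2 n3 \<subseteq> unitary_group n"
    using block_unitary3_subset_unitary_group[of n1 n2 n3] assms(7) by simp
  moreover have "block_unitary3 m1 m2 m3 \<subseteq> unitary_group n"
    using block_unitary3_subset_unitary_group[of m1 m2 m3] assms(8) by simp
  ultimately have "?LGH \<subseteq> unitary_group n"
    using orthogonal_group_subset_unitary_group by (intro set_prod3_subset_unitary_group)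
  moreover have blocks: "0 < n1" "0 < n2" "n1 + n2 < n" "0 < m1" "0 < m2" "m1 + m2 < n"
    using assms by auto
  let ?W = "embedded_unitary3 n n1 n2 m1 m2"
  have "?W \<in> unitary_group n"
    using embedded_unitary3_unitary_group[OF blocks] .
  moreover have "?W \<notin> ?LGH"
    using double_coset_invariant_set_prod3_real[OF assms(7,8)]
      double_coset_invariant_embedded_unitary3[OF blocks] unitary3_corner_product_not_real
    by metis
  ultimately show ?thesis
    by blast
qed

end
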